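(* There are $2^{\mathfrak{c}}$ many pairwise non-isomorphic (as linear orders under the usual order of $\mathbb{R}$) $\mathfrak{c}$-dense subsets of $\mathbb{R}$ that are closed under Turing equivalence.
   Context: $\mathfrak{c}=2^{\aleph_0}$. A set $A\subseteq\mathbb{R}$ is $\mathfrak{c}$-dense if $|I\cap A|=\mathfrak{c}$ for every nonempty open interval $I$. A set of reals is closed under Turing equivalence if it contains every real Turing equivalent to one of its elements. *)

theory Defs
  imports Complex_Main "HOL-Library.Equipollence" "HOL-Library.Nat_Bijection"
begin

text \<open>Codes of partial recursive functions with one oracle gate (Kleene style),
acting on argument lists of natural numbers.\<close>

datatype recf =
    Zr
  | Sc
  | Pj nat
  | Cn recf "recf list"
  | Pr recf recf
  | Mn recf
  | Orc

inductive ev :: "nat set \<Rightarrow> recf \<Rightarrow> nat list \<Rightarrow> nat \<Rightarrow> bool" for X :: "nat set" where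
  ev_Zr: "ev X Zr xs 0"
| ev_Sc: "ev X Sc (x # xs) (Suc x)"
| ev_Pj: "i < length xs \<Longrightarrow> ev X (Pj i) xs (xs ! i)"
| ev_Cn: "length ys = length gs \<Longrightarrow> (\<forall>i < length gs. ev X (gs ! i) xs (ys ! i))
            \<Longrightarrow> ev X f ys z \<Longrightarrow> ev X (Cn f gs) xs z"
| ev_Pr0: "ev X f xs y \<Longrightarrow> ev X (Pr f g) (0 # xs) y"
| ev_PrS: "ev X (Pr f g) (n # xs) y \<Longrightarrow> ev X g (y # n # xs) z
            \<Longrightarrow> ev X (Pr f g) (Suc n # xs) z"
| ev_Mn: "ev X f (n # xs) 0 \<Longrightarrow> (\<forall>m < n. \<exists>k. ev X f (m # xs) (Suc k))
            \<Longrightarrow> ev X (Mn f) xs n"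
| ev_Orc: "ev X Orc (x # xs) (if x \<in> X then 1 else 0)"

definition turing_red :: "nat set \<Rightarrow> nat set \<Rightarrow> bool" where
  "turing_red A B \<longleftrightarrow> (\<exists>p. \<forall>n. ev B p [n] (if n \<in> A then 1 else 0))"

section \<open>Reals as sets of naturals (Dedekind left cuts)\<close>

text \<open>A fixed computable enumeration of the rationals (surjective, with repetitions).\<close>

definition rat_code :: "nat \<Rightarrow> real" where
  "rat_code n = real_of_int (int_decode (fst (prod_decode n))) / real (Suc (snd (prod_decode n)))"

definition left_cut :: "real \<Rightarrow> nat set" where
  "left_cut x = {n. rat_code n < x}"

definition turing_equiv_real :: "real \<Rightarrow> real \<Rightarrow> bool" where
  "turing_equiv_real x y \<longleftrightarrow> turing_red (left_cut x) (left_cut y) \<and> turing_red (left_cut y) (left_cut x)"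

definition turing_closed :: "real set \<Rightarrow> bool" where
  "turing_closed A \<longleftrightarrow> (\<forall>x \<in> A. \<forall>y. turing_equiv_real y x \<longrightarrow> y \<in> A)"

definition c_dense :: "real set \<Rightarrow> bool" where
  "c_dense A \<longleftrightarrow> (\<forall>a b. a < b \<longrightarrow> ({a<..<b} \<inter> A) \<approx> (UNIV :: real set))"

definition order_iso_sets :: "real set \<Rightarrow> real set \<Rightarrow> bool" where
  "order_iso_sets A B \<longleftrightarrow> (\<exists>f. bij_betw f A B \<and> strict_mono_on A f)"

end

theory Submission
  imports Defs "HOL-Analysis.Analysis"
begin

(* There are only countably many oracle programs, so every real is Turing equivalent to only
   countably many reals. A transfinite recursion of length c therefore picks, for every index
   (a, b, r) with a < b, a point of (a, b), and for every real r a further marker point, all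
   pairwise Turing inequivalent. For S a set of reals, the Turing closure of the interval points
   together with the markers indexed by S is c-dense and Turing closed, and S can be read off
   from it: this gives 2^c such sets. An order isomorphism onto an order-dense set of reals is
   determined by the countably many rational boxes below its graph, so one isomorphism type
   contains at most c of these sets, and 2^c pairwise non-isomorphic ones remain. *)

unbundle cardinal_syntax

section \<open>Turing-equivalence classes are countable\<close>

instance recf :: countable
  by countable_datatype

inductive_cases ev_ZrE: "ev X Zr xs y"
inductive_cases ev_ScE: "ev X Sc xs y"
inductive_cases ev_PjE: "ev X (Pj i) xs y"
inductive_cases ev_CnE: "ev X (Cn f gs) xs y"
inductive_cases ev_Pr0E: "ev X (Pr f g) (0 # xs) y"
inductive_cases ev_PrSE: "ev X (Pr f g) (Suc n # xs) y"
inductive_cases ev_MnE: "ev X (Mn f) xs y"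
inductive_cases ev_OrcE: "ev X Orc xs y"

lemma ev_unique: "ev X f xs y \<Longrightarrow> ev X f xs y' \<Longrightarrow> y = y'"
proof (induction arbitrary: y' rule: ev.induct)
  case (ev_Pr0 f xs y g)
  from ev_Pr0.prems show ?case
    by (auto elim: ev_Pr0E intro: ev_Pr0.IH)
next
  case (ev_Cn ys gs xs f z)
  from ev_Cn.prems obtain ys' where "length ys' = length gs"
    and args: "\<forall>i<length gs. ev X (gs ! i) xs (ys' ! i)" and "ev X f ys' y'"
    by (auto elim: ev_CnE)
  moreover have "ys = ys'"
    using ev_Cn.hyps(1) ev_Cn.IH(1) \<open>length ys' = length gs\<close> args
    by (intro nth_equalityI) auto
  ultimately show ?case
    using ev_Cn.IH(2) by blast
next
  case (ev_PrS f g n xs y z)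
  from ev_PrS.prems obtain y2 where "ev X (Pr f g) (n # xs) y2" "ev X g (y2 # n # xs) y'"
    by (auto elim: ev_PrSE)
  then show ?case
    using ev_PrS.IH by metis
next
  case (ev_Mn f n xs)
  from ev_Mn.prems have zero: "ev X f (y' # xs) 0"
    and below: "\<forall>m<y'. \<exists>k. ev X f (m # xs) (Suc k)"
    by (auto elim: ev_MnE)
  show ?case
  proof (rule linorder_cases)
    assume "n < y'"
    then obtain k where "ev X f (n # xs) (Suc k)"
      using below by blast
    from ev_Mn.IH(1)[OF this] show ?thesis
      by simp
  next
    assume "y' < n"
    then obtain k where "\<forall>v. ev X f (y' # xs) v \<longrightarrow> Suc k = v"
      using ev_Mn.IH(2) by blast
    with zero show ?thesis
      by blast
  qed simp
qed (auto elim: ev_ZrE ev_ScE ev_PjE ev_OrcE)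

lemma Rats_subset_range_rat_code: "\<rat> \<subseteq> range rat_code"
proof
  fix q :: real
  assume "q \<in> \<rat>"
  then obtain a b where "b > 0" and q: "q = of_int a / of_int b"
    by (auto elim: Rats_cases')
  then have "rat_code (prod_encode (int_encode a, nat b - 1)) = q"
    by (simp add: rat_code_def q of_nat_diff)
  then show "q \<in> range rat_code"
    by (metis rangeI)
qed

lemma inj_left_cut: "inj left_cut"
proof -
  have "left_cut x \<noteq> left_cut y" if "x < y" for x y
  proof -
    obtain q where "q \<in> \<rat>" "x < q" "q < y"
      using \<open>x < y\<close> Rats_dense_in_real by blast
    moreover obtain n where "rat_code n = q"
      using \<open>q \<in> \<rat>\<close> Rats_subset_range_rat_code by blast
    ultimately have "n \<in> left_cut y - left_cut x"
      by (simp add: left_cut_def)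
    then show ?thesis
      by blast
  qed
  then show ?thesis
    by (metis injI linorder_neq_iff)
qed

lemma countable_turing_red: "countable {A. turing_red A B}"
proof -
  have "A = {n. ev B p [n] 1}" if "\<forall>n. ev B p [n] (if n \<in> A then 1 else 0)" for A p
    using that ev_unique by (fastforce split: if_splits)
  then have "{A. turing_red A B} \<subseteq> range (\<lambda>p. {n. ev B p [n] 1})"
    unfolding turing_red_def by blast
  then show ?thesis
    by (rule countable_subset) simp
qed

lemma countable_turing_equiv_real: "countable {y. turing_equiv_real y x}"
proof (rule countable_image_inj_on)
  show "countable (left_cut ` {y. turing_equiv_real y x})"
    by (rule countable_subset[OF _ countable_turing_red]) (auto simp: turing_equiv_real_def)
  show "inj_on left_cut {y. turing_equiv_real y x}"
    using inj_left_cut by (simp add: inj_on_def inj_def)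
qed

lemma countable_rtranclp_class:
  assumes "\<And>x. countable {y. R y x}"
  shows "countable {y. R\<^sup>*\<^sup>* y x}"
proof -
  have "countable {y. (R ^^ n) y x}" for n
  proof (induction n arbitrary: x)
    case (Suc n)
    have "{y. (R ^^ Suc n) y x} = (\<Union>z\<in>{z. R z x}. {y. (R ^^ n) y z})"
      by auto
    then show ?case
      using Suc assms by auto
  qed simp
  moreover have "{y. R\<^sup>*\<^sup>* y x} = (\<Union>n. {y. (R ^^ n) y x})"
    by (auto simp: rtranclp_power)
  ultimately show ?thesis
    by auto
qed

text \<open>\<open>turing_equiv_real\<close> is an equivalence relation, but working with its reflexive transitive
  closure spares us the programs witnessing reflexivity and transitivity.\<close>

definition turing_hull :: "real set \<Rightarrow> real set" where
  "turing_hull X = {y. \<exists>x\<in>X. turing_equiv_real\<^sup>*\<^sup>* y x}"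

lemma subset_turing_hull: "X \<subseteq> turing_hull X"
  by (auto simp: turing_hull_def)

lemma turing_closed_turing_hull: "turing_closed (turing_hull X)"
  by (auto simp: turing_closed_def turing_hull_def intro: converse_rtranclp_into_rtranclp)

lemma image_mem_turing_hull_iff:
  assumes "\<And>i j. i \<noteq> j \<Longrightarrow> \<not> turing_equiv_real\<^sup>*\<^sup>* (f i) (f j)"
  shows "f i \<in> turing_hull (f ` J) \<longleftrightarrow> i \<in> J"
  using assms by (auto simp: turing_hull_def) metis

section \<open>Cardinal arithmetic\<close>

lemma lepoll_iff_card_of_ordLeq: "A \<lesssim> B \<longleftrightarrow> |A| \<le>o |B|"
  unfolding lepoll_def card_of_ordLeq[symmetric] by blast

lemma lesspoll_iff_card_of_ordLess: "A \<prec> B \<longleftrightarrow> |A| <o |B|"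
  unfolding lesspoll_def lepoll_iff_card_of_ordLeq eqpoll_iff_card_of_ordIso
  by (metis card_of_Well_order not_ordLeq_iff_ordLess ordIso_iff_ordLeq ordLess_imp_ordLeq)

lemma lepoll_total: "A \<lesssim> B \<or> B \<lesssim> A"
  unfolding lepoll_iff_card_of_ordLeq by (rule ordLeq_total[OF card_of_Well_order card_of_Well_order])

lemma UN_lepoll_infinite:
  assumes "infinite K" "I \<lesssim> K" "\<And>i. i \<in> I \<Longrightarrow> A i \<lesssim> K"
  shows "(\<Union>i\<in>I. A i) \<lesssim> K"
  using card_of_UNION_ordLeq_infinite[of K I A] assms by (simp add: lepoll_iff_card_of_ordLeq)

lemma countable_lepoll_infinite: "countable A \<Longrightarrow> infinite B \<Longrightarrow> A \<lesssim> B"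
  by (meson countable_def infinite_le_lepoll lepoll_def lepoll_trans subset_UNIV)

lemma countable_lesspoll_uncountable: "countable A \<Longrightarrow> uncountable B \<Longrightarrow> A \<prec> B"
  by (meson countable_eqpoll countable_lepoll_infinite countable_finite eqpoll_sym lesspoll_def)

lemma UN_countable_lesspoll:
  assumes "uncountable B" "I \<prec> B" "\<And>i. i \<in> I \<Longrightarrow> countable (A i)"
  shows "(\<Union>i\<in>I. A i) \<prec> B"
proof (cases "finite I")
  case True
  with assms show ?thesis
    by (simp add: countable_finite countable_lesspoll_uncountable)
next
  case False
  with assms(3) have "(\<Union>i\<in>I. A i) \<lesssim> I"
    by (simp add: UN_lepoll_infinite countable_lepoll_infinite)
  then show ?thesis
    using assms(2) by (rule lesspoll_trans1)
qed

lemma infinite_Times_self_eqpoll: "infinite A \<Longrightarrow> A \<times> A \<approx> A"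
  by (simp add: card_of_Times_same_infinite eqpoll_iff_card_of_ordIso)

lemma underS_card_of_lesspoll: "a \<in> A \<Longrightarrow> underS |A| a \<prec> A"
  unfolding lesspoll_iff_card_of_ordLess
  by (rule card_of_underS[OF card_of_Card_order]) (simp add: Field_card_of)

lemma exists_transversal:
  assumes "equiv G r"
  shows "\<exists>F\<subseteq>G. F \<approx> G // r \<and> (\<forall>x\<in>F. \<forall>y\<in>F. (x, y) \<in> r \<longrightarrow> x = y)"
proof -
  define rep where "rep C = (SOME x. x \<in> C)" for C :: "'a set"
  have rep: "rep C \<in> C" if "C \<in> G // r" for C
    unfolding rep_def using in_quotient_imp_non_empty[OF assms that] by (simp add: some_in_eq)
  have related_iff: "(rep C, rep D) \<in> r \<longleftrightarrow> C = D" if "C \<in> G // r" "D \<in> G // r" for C D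
    using quotient_eq_iff[OF assms that rep[OF that(1)] rep[OF that(2)]] by simp
  have "inj_on rep (G // r)"
    by (metis assms inj_onI quotient_disj rep disjoint_iff)
  then have "rep ` (G // r) \<approx> G // r"
    by (rule inj_on_image_eqpoll_self)
  moreover have "rep ` (G // r) \<subseteq> G"
    using rep Union_quotient[OF assms] by blast
  ultimately show ?thesis
    using related_iff by blast
qed

lemma quotient_eqpoll_if_small_classes:
  assumes "equiv G r" "infinite K" "\<And>x. x \<in> G \<Longrightarrow> r `` {x} \<lesssim> K" and "\<not> G \<lesssim> K"
  shows "G // r \<approx> G"
proof (rule lepoll_antisym)
  have "G // r = (\<lambda>x. r `` {x}) ` G"
    by (auto simp: quotient_def)
  then show "G // r \<lesssim> G"
    by (simp add: image_lepoll)
  have classes: "C \<lesssim> K" if "C \<in> G // r" for C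
    using that assms(3) by (auto elim: quotientE)
  have G_eq: "G = (\<Union>C\<in>G // r. C)"
    using Union_quotient[OF assms(1)] by simp
  show "G \<lesssim> G // r"
  proof (cases "G // r \<lesssim> K")
    case True
    have "(\<Union>C\<in>G // r. C) \<lesssim> K"
      by (rule UN_lepoll_infinite[OF assms(2) True classes])
    with G_eq assms(4) show ?thesis
      by argo
  next
    case False
    then have "K \<lesssim> G // r"
      by (meson lepoll_total)
    then have "infinite (G // r)"
      by (meson assms(2) infinite_le_lepoll lepoll_trans)
    moreover have "C \<lesssim> G // r" if "C \<in> G // r" for C
      by (rule lepoll_trans[OF classes[OF that] \<open>K \<lesssim> G // r\<close>])
    ultimately have "(\<Union>C\<in>G // r. C) \<lesssim> G // r"
      by (rule UN_lepoll_infinite[OF _ lepoll_refl])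
    with G_eq show ?thesis
      by argo
  qed
qed

lemma exists_large_transversal:
  assumes "equiv G r" "infinite K" "\<And>x. x \<in> G \<Longrightarrow> r `` {x} \<lesssim> K" and "\<not> G \<lesssim> K"
  shows "\<exists>F\<subseteq>G. F \<approx> G \<and> (\<forall>x\<in>F. \<forall>y\<in>F. (x, y) \<in> r \<longrightarrow> x = y)"
proof -
  obtain F where "F \<subseteq> G" "F \<approx> G // r" and "\<forall>x\<in>F. \<forall>y\<in>F. (x, y) \<in> r \<longrightarrow> x = y"
    using exists_transversal[OF assms(1)] by blast
  moreover have "F \<approx> G"
    using \<open>F \<approx> G // r\<close> quotient_eqpoll_if_small_classes[OF assms] by (rule eqpoll_trans)
  ultimately show ?thesis
    by blast
qed

lemma exists_avoiding_countable_classes: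
  fixes R :: "'a \<Rightarrow> 'a \<Rightarrow> bool"
  assumes "uncountable (UNIV :: 'a set)" "I \<prec> (UNIV :: 'a set)" "(UNIV :: 'a set) \<lesssim> X"
    and "\<And>x. countable {y. R y x}"
  shows "\<exists>y\<in>X. \<forall>j\<in>I. \<not> R y (g j)"
proof -
  let ?U = "\<Union>j\<in>I. {y. R y (g j)}"
  have "?U \<prec> (UNIV :: 'a set)"
    using assms(1,2,4) by (intro UN_countable_lesspoll)
  then have "?U \<prec> X"
    using assms(3) by (rule lesspoll_trans2)
  then have "\<not> X \<subseteq> ?U"
    using lesspoll_trans1 subset_imp_lepoll by blast
  then show ?thesis
    by blast
qed

text \<open>Transfinite recursion along the initial well-order of the index type: at each stage fewer
  than \<open>|'a|\<close> countable classes have to be avoided.\<close>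

lemma exists_pairwise_unrelated_choice:
  fixes R :: "'a \<Rightarrow> 'a \<Rightarrow> bool" and X :: "'i \<Rightarrow> 'a set"
  assumes uncountable: "uncountable (UNIV :: 'a set)"
    and index: "(UNIV :: 'i set) \<lesssim> (UNIV :: 'a set)"
    and large: "\<And>i. (UNIV :: 'a set) \<lesssim> X i"
    and countable_classes: "\<And>x. countable {y. R y x}"
    and "symp R"
  shows "\<exists>f. \<forall>i. f i \<in> X i \<and> (\<forall>j. j \<noteq> i \<longrightarrow> \<not> R (f i) (f j))"
proof -
  let ?W = "|UNIV :: 'i set|"
  have avoid: "\<exists>y. y \<in> X i \<and> (\<forall>j\<in>underS ?W i. \<not> R y (g j))" for g i
  proof -
    have "underS ?W i \<prec> (UNIV :: 'a set)"
      using underS_card_of_lesspoll[OF UNIV_I] index by (rule lesspoll_trans2)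
    then show ?thesis
      using exists_avoiding_countable_classes[where R = R and g = g, OF uncountable _ large]
        countable_classes by blast
  qed
  define f where "f = wfrec (?W - Id) (\<lambda>g i. SOME y. y \<in> X i \<and> (\<forall>j\<in>underS ?W i. \<not> R y (g j)))"
  have f_avoids: "f i \<in> X i \<and> (\<forall>j\<in>underS ?W i. \<not> R (f i) (f j))" for i
  proof -
    have "wf (?W - Id)"
      using card_of_well_order_on well_order_on_def by blast
    moreover have "cut f (?W - Id) i j = f j" if "j \<in> underS ?W i" for j
      using that by (simp add: cut_apply underS_def)
    ultimately have "f i = (SOME y. y \<in> X i \<and> (\<forall>j\<in>underS ?W i. \<not> R y (f j)))"
      unfolding f_def by (subst wfrec) (simp_all cong: ball_cong)
    then show ?thesis
      using someI_ex[OF avoid[where g = f and i = i]] by simp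
  qed
  have "\<not> R (f i) (f j)" if "j \<noteq> i" for i j
  proof -
    have "(j, i) \<in> ?W \<or> (i, j) \<in> ?W"
      using card_of_well_order_on[of "UNIV :: 'i set"] that
      unfolding well_order_on_def linear_order_on_def total_on_def by blast
    then have "j \<in> underS ?W i \<or> i \<in> underS ?W j"
      using that by (auto simp: underS_def)
    then show ?thesis
      using f_avoids \<open>symp R\<close> by (meson sympD)
  qed
  then show ?thesis
    using f_avoids by blast
qed

section \<open>Order isomorphisms between sets of reals\<close>

definition order_dense :: "real set \<Rightarrow> bool" where
  "order_dense A \<longleftrightarrow> (\<forall>a b. a < b \<longrightarrow> (\<exists>x\<in>A. a < x \<and> x < b))"

lemma order_dense_if_c_dense:
  assumes "c_dense A"
  shows "order_dense A"
  unfolding order_dense_def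
proof (intro allI impI)
  fix a b :: real
  assume "a < b"
  then have "{a<..<b} \<inter> A \<approx> (UNIV :: real set)"
    using assms by (simp add: c_dense_def)
  then have "{a<..<b} \<inter> A \<noteq> {}"
    by (metis UNIV_not_empty eqpoll_empty_iff_empty eqpoll_sym)
  then show "\<exists>x\<in>A. a < x \<and> x < b"
    by auto
qed

lemma order_iso_sets_refl: "order_iso_sets A A"
  unfolding order_iso_sets_def by (intro exI[of _ id]) (simp add: strict_mono_on_def)

lemma order_iso_sets_sym:
  assumes "order_iso_sets A B"
  shows "order_iso_sets B A"
proof -
  obtain f where f: "bij_betw f A B" "strict_mono_on A f"
    using assms by (auto simp: order_iso_sets_def)
  let ?g = "the_inv_into A f"
  have g: "bij_betw ?g B A"
    using f(1) by (rule bij_betw_the_inv_into)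
  have "strict_mono_on B ?g"
  proof (rule strict_mono_onI)
    fix r s
    assume "r \<in> B" "s \<in> B" "r < s"
    moreover have "f (?g r) = r" "f (?g s) = s"
      using \<open>r \<in> B\<close> \<open>s \<in> B\<close> f(1) by (auto simp: bij_betw_def f_the_inv_into_f)
    moreover have "?g r \<in> A" "?g s \<in> A"
      using \<open>r \<in> B\<close> \<open>s \<in> B\<close> g by (auto simp: bij_betw_def)
    ultimately show "?g r < ?g s"
      using strict_mono_on_less[OF f(2)] by metis
  qed
  with g show ?thesis
    by (auto simp: order_iso_sets_def)
qed

lemma order_iso_sets_trans:
  assumes "order_iso_sets A B" "order_iso_sets B C"
  shows "order_iso_sets A C"
proof -
  obtain f g where f: "bij_betw f A B" "strict_mono_on A f"
    and g: "bij_betw g B C" "strict_mono_on B g"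
    using assms by (auto simp: order_iso_sets_def)
  have "strict_mono_on A (g \<circ> f)"
    using f g by (intro strict_mono_onI) (simp add: bij_betw_apply strict_mono_onD)
  moreover have "bij_betw (g \<circ> f) A C"
    using f(1) g(1) by (rule bij_betw_trans)
  ultimately show ?thesis
    by (auto simp: order_iso_sets_def)
qed

lemma equiv_order_iso_sets: "equiv G {(A, B). A \<in> G \<and> B \<in> G \<and> order_iso_sets A B}"
  by (rule equivI) (auto simp: refl_on_def sym_def trans_def
      intro: order_iso_sets_refl order_iso_sets_sym order_iso_sets_trans)

definition rat_cut_code :: "real set \<Rightarrow> (real \<Rightarrow> real) \<Rightarrow> (real \<times> real) set" where
  "rat_cut_code A f = {(p, q). p \<in> \<rat> \<and> q \<in> \<rat> \<and> (\<exists>x\<in>A. x < p \<and> q < f x)}"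

lemma le_if_rat_cut_code_eq:
  fixes f g :: "real \<Rightarrow> real"
  assumes f: "strict_mono_on A f" and g: "strict_mono_on A g" and "order_dense (g ` A)"
    and code: "rat_cut_code A f = rat_cut_code A g" and "x \<in> A"
  shows "g x \<le> f x"
proof (rule ccontr)
  assume "\<not> g x \<le> f x"
  then obtain y where "y \<in> A" "f x < g y" "g y < g x"
    using \<open>order_dense (g ` A)\<close> unfolding order_dense_def by (metis imageE not_le)
  then have "y < x"
    using strict_mono_on_less[OF g \<open>y \<in> A\<close> \<open>x \<in> A\<close>] by simp
  then obtain p where "p \<in> \<rat>" "y < p" "p < x"
    using Rats_dense_in_real by blast
  obtain q where "q \<in> \<rat>" "f x < q" "q < g y"
    using Rats_dense_in_real \<open>f x < g y\<close> by blast
  have in_g: "(p, q) \<in> rat_cut_code A g"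
    using \<open>p \<in> \<rat>\<close> \<open>q \<in> \<rat>\<close> \<open>y \<in> A\<close> \<open>y < p\<close> \<open>q < g y\<close> by (auto simp: rat_cut_code_def)
  have "f z < q" if "z \<in> A" "z < p" for z
    using strict_mono_on_less[OF f that(1) \<open>x \<in> A\<close>] that(2) \<open>p < x\<close> \<open>f x < q\<close> by simp
  then have "(p, q) \<notin> rat_cut_code A f"
    by (auto simp: rat_cut_code_def not_less_iff_gr_or_eq)
  with in_g code show False
    by simp
qed

lemma eq_if_rat_cut_code_eq:
  fixes f g :: "real \<Rightarrow> real"
  assumes "strict_mono_on A f" "strict_mono_on A g" "order_dense (f ` A)" "order_dense (g ` A)"
    and "rat_cut_code A f = rat_cut_code A g" and "x \<in> A"
  shows "f x = g x"
  using le_if_rat_cut_code_eq[of A f g x] le_if_rat_cut_code_eq[of A g f x] assms by simp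

lemma Pow_countable_lepoll_reals:
  assumes "countable C"
  shows "Pow C \<lesssim> (UNIV :: real set)"
proof -
  obtain h :: "'a \<Rightarrow> nat" where "inj_on h C"
    using assms by (auto simp: countable_def)
  then have "Pow C \<lesssim> (UNIV :: nat set set)"
    unfolding lepoll_def by (intro exI[of _ "image h"]) (simp add: inj_on_image_Pow)
  then show ?thesis
    using nat_sets_eqpoll_reals by (rule lepoll_trans2)
qed

lemma order_iso_class_lepoll: "{B. order_dense B \<and> order_iso_sets A B} \<lesssim> (UNIV :: real set)"
proof -
  let ?C = "{B. order_dense B \<and> order_iso_sets A B}"
  define iso :: "real set \<Rightarrow> real \<Rightarrow> real"
    where "iso B = (SOME f. bij_betw f A B \<and> strict_mono_on A f)" for B
  have iso: "bij_betw (iso B) A B \<and> strict_mono_on A (iso B)" if "B \<in> ?C" for B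
  proof -
    have "\<exists>f. bij_betw f A B \<and> strict_mono_on A f"
      using that by (simp add: order_iso_sets_def)
    then show ?thesis
      unfolding iso_def by (rule someI_ex)
  qed
  have "inj_on (\<lambda>B. rat_cut_code A (iso B)) ?C"
  proof (rule inj_onI)
    fix B B'
    assume B: "B \<in> ?C" and B': "B' \<in> ?C"
      and code: "rat_cut_code A (iso B) = rat_cut_code A (iso B')"
    have "iso B ` A = B" "iso B' ` A = B'"
      using iso[OF B] iso[OF B'] by (simp_all add: bij_betw_def)
    moreover from this have "iso B x = iso B' x" if "x \<in> A" for x
      using iso[OF B] iso[OF B'] B B' code that by (intro eq_if_rat_cut_code_eq) auto
    ultimately show "B = B'"
      by (metis image_cong)
  qed
  then have "?C \<approx> (\<lambda>B. rat_cut_code A (iso B)) ` ?C"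
    by (rule inj_on_image_eqpoll_self[THEN eqpoll_sym])
  also have "\<dots> \<lesssim> Pow (\<rat> \<times> \<rat> :: (real \<times> real) set)"
    by (rule subset_imp_lepoll) (auto simp: rat_cut_code_def)
  also have "\<dots> \<lesssim> (UNIV :: real set)"
    by (simp add: Pow_countable_lepoll_reals countable_rat)
  finally show ?thesis .
qed

lemma exists_pairwise_non_iso_subfamily:
  assumes "G \<approx> Pow (UNIV :: real set)" and "\<And>A. A \<in> G \<Longrightarrow> order_dense A"
  shows "\<exists>F\<subseteq>G. F \<approx> Pow (UNIV :: real set) \<and> (\<forall>A\<in>F. \<forall>B\<in>F. A \<noteq> B \<longrightarrow> \<not> order_iso_sets A B)"
proof -
  define r where "r = {(A, B). A \<in> G \<and> B \<in> G \<and> order_iso_sets A B}"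
  have "equiv G r"
    unfolding r_def by (rule equiv_order_iso_sets)
  moreover have "infinite (UNIV :: real set)"
    by (rule infinite_UNIV_char_0)
  moreover have "r `` {A} \<lesssim> (UNIV :: real set)" if "A \<in> G" for A
  proof -
    have "r `` {A} \<subseteq> {B. order_dense B \<and> order_iso_sets A B}"
    proof
      fix B
      assume "B \<in> r `` {A}"
      then have "B \<in> G" "order_iso_sets A B"
        by (simp_all add: r_def)
      then show "B \<in> {B. order_dense B \<and> order_iso_sets A B}"
        using assms(2) by simp
    qed
    then show ?thesis
      by (rule lepoll_trans[OF subset_imp_lepoll order_iso_class_lepoll])
  qed
  moreover have "\<not> G \<lesssim> (UNIV :: real set)"
  proof
    assume "G \<lesssim> (UNIV :: real set)"
    then have "Pow (UNIV :: real set) \<lesssim> (UNIV :: real set)"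
      by (rule lepoll_trans1[OF eqpoll_sym[OF assms(1)]])
    with lesspoll_Pow_self have "(UNIV :: real set) \<prec> (UNIV :: real set)"
      by (rule lesspoll_trans2)
    then show False
      by simp
  qed
  ultimately have "\<exists>F\<subseteq>G. F \<approx> G \<and> (\<forall>A\<in>F. \<forall>B\<in>F. (A, B) \<in> r \<longrightarrow> A = B)"
    by (rule exists_large_transversal)
  then obtain F where F: "F \<subseteq> G" "F \<approx> G" and transversal: "\<forall>A\<in>F. \<forall>B\<in>F. (A, B) \<in> r \<longrightarrow> A = B"
    by blast
  have "\<not> order_iso_sets A B" if "A \<in> F" "B \<in> F" "A \<noteq> B" for A B
  proof
    assume "order_iso_sets A B"
    moreover have "A \<in> G" "B \<in> G"
      using that(1,2) F(1) by auto
    ultimately have "(A, B) \<in> r"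
      by (simp add: r_def)
    with transversal that show False
      by blast
  qed
  moreover have "F \<approx> Pow (UNIV :: real set)"
    using F(2) assms(1) by (rule eqpoll_trans)
  ultimately show ?thesis
    using F(1) by blast
qed

section \<open>A large family of c-dense Turing-closed sets\<close>

lemma UNIV_triples_eqpoll:
  "infinite (UNIV :: 'a set) \<Longrightarrow> (UNIV :: ('a \<times> 'a \<times> 'a) set) \<approx> (UNIV :: 'a set)"
  unfolding UNIV_Times_UNIV[symmetric]
  by (metis eqpoll_refl eqpoll_trans infinite_Times_self_eqpoll times_eqpoll_cong)

lemma exists_turing_unrelated_choice:
  fixes X :: "'i \<Rightarrow> real set"
  assumes "(UNIV :: 'i set) \<lesssim> (UNIV :: real set)" and "\<And>i. (UNIV :: real set) \<lesssim> X i"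
  shows "\<exists>f. \<forall>i. f i \<in> X i \<and> (\<forall>j. j \<noteq> i \<longrightarrow> \<not> turing_equiv_real\<^sup>*\<^sup>* (f i) (f j))"
proof (rule exists_pairwise_unrelated_choice[OF uncountable_UNIV_real assms])
  show "countable {y. turing_equiv_real\<^sup>*\<^sup>* y x}" for x
    by (rule countable_rtranclp_class) (rule countable_turing_equiv_real)
  have "symp turing_equiv_real"
    by (auto simp: symp_def turing_equiv_real_def)
  then show "symp turing_equiv_real\<^sup>*\<^sup>*"
    using equivp_rtranclp equivp_reflp_symp_transp by blast
qed

lemma c_dense_if_inj_into_intervals:
  assumes "\<And>a b. a < b \<Longrightarrow> \<exists>g :: real \<Rightarrow> real. inj g \<and> range g \<subseteq> {a<..<b} \<inter> A"
  shows "c_dense A"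
  unfolding c_dense_def
proof (intro allI impI)
  fix a b :: real
  assume "a < b"
  then obtain g :: "real \<Rightarrow> real" where "inj g" "range g \<subseteq> {a<..<b} \<inter> A"
    using assms by blast
  have "(UNIV :: real set) \<approx> range g"
    using \<open>inj g\<close> by (rule inj_on_image_eqpoll_self[THEN eqpoll_sym])
  also have "\<dots> \<lesssim> {a<..<b} \<inter> A"
    using \<open>range g \<subseteq> {a<..<b} \<inter> A\<close> by (rule subset_imp_lepoll)
  finally show "{a<..<b} \<inter> A \<approx> (UNIV :: real set)"
    by (rule lepoll_antisym[OF subset_imp_lepoll[OF subset_UNIV]])
qed

text \<open>Indices \<open>(a, b, r)\<close> with \<open>a < b\<close> place continuum many points into every interval; the
  indices \<open>(1, 0, r)\<close> give marker points, and \<open>T S\<close> below contains the marker of \<open>r\<close> iff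
  \<open>r \<in> S\<close>.\<close>

definition index_interval :: "real \<times> real \<times> real \<Rightarrow> real set" where
  "index_interval = (\<lambda>(a, b, r). if a < b then {a<..<b} else UNIV)"

lemma UNIV_lepoll_index_interval: "(UNIV :: real set) \<lesssim> index_interval i"
proof -
  obtain a b r where i: "i = (a, b, r)"
    by (cases i)
  show ?thesis
  proof (cases "a < b")
    case True
    then have "(UNIV :: real set) \<approx> {a<..<b}"
      by (simp add: open_interval_eqpoll_reals eqpoll_sym)
    with True show ?thesis
      by (simp add: index_interval_def i eqpoll_imp_lepoll)
  qed (simp add: index_interval_def i)
qed

lemma exists_inj_c_dense_turing_closed_family:
  "\<exists>T :: real set \<Rightarrow> real set. inj T \<and> (\<forall>S. c_dense (T S) \<and> turing_closed (T S))"
proof -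
  have index: "(UNIV :: (real \<times> real \<times> real) set) \<lesssim> (UNIV :: real set)"
    using UNIV_triples_eqpoll[OF infinite_UNIV_char_0] by (rule eqpoll_imp_lepoll)
  obtain f where f: "\<forall>i. f i \<in> index_interval i
      \<and> (\<forall>j. j \<noteq> i \<longrightarrow> \<not> turing_equiv_real\<^sup>*\<^sup>* (f i) (f j))"
    using exists_turing_unrelated_choice[OF index UNIV_lepoll_index_interval] ..
  then have f_in: "f i \<in> index_interval i"
    and unrelated: "i \<noteq> j \<Longrightarrow> \<not> turing_equiv_real\<^sup>*\<^sup>* (f i) (f j)" for i j
    by (simp_all del: split_paired_All)
  have "inj f"
    by (rule injI) (metis unrelated rtranclp.rtrancl_refl)
  define T where "T S = turing_hull (f ` ({(a, b, r). a < b} \<union> {(1, 0, r) | r. r \<in> S}))" for S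
  have marker: "f (1, 0, r) \<in> T S \<longleftrightarrow> r \<in> S" for S r
    unfolding T_def by (subst image_mem_turing_hull_iff[OF unrelated]) auto
  have "inj T"
    by (rule injI) (metis marker set_eqI)
  moreover have "c_dense (T S)" for S
  proof (rule c_dense_if_inj_into_intervals)
    fix a b :: real
    assume "a < b"
    have "inj (\<lambda>r. f (a, b, r))"
      by (rule injI) (metis \<open>inj f\<close> injD prod.inject)
    moreover have "f (a, b, r) \<in> {a<..<b} \<inter> T S" for r
    proof
      show "f (a, b, r) \<in> {a<..<b}"
        using f_in[of "(a, b, r)"] \<open>a < b\<close> by (simp add: index_interval_def)
      show "f (a, b, r) \<in> T S"
        unfolding T_def using \<open>a < b\<close> by (intro subsetD[OF subset_turing_hull]) auto
    qed
    ultimately show "\<exists>g :: real \<Rightarrow> real. inj g \<and> range g \<subseteq> {a<..<b} \<inter> T S"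
      by blast
  qed
  moreover have "turing_closed (T S)" for S
    by (simp add: T_def turing_closed_turing_hull)
  ultimately show ?thesis
    by blast
qed

theorem mainTheorem11:
  shows "\<exists>F :: real set set. F \<approx> Pow (UNIV :: real set)
           \<and> (\<forall>A \<in> F. c_dense A \<and> turing_closed A)
           \<and> (\<forall>A \<in> F. \<forall>B \<in> F. A \<noteq> B \<longrightarrow> \<not> order_iso_sets A B)"
proof -
  obtain T :: "real set \<Rightarrow> real set"
    where "inj T" and T: "\<And>S. c_dense (T S) \<and> turing_closed (T S)"
    using exists_inj_c_dense_turing_closed_family by blast
  have T_range: "c_dense A \<and> turing_closed A" if "A \<in> range T" for A
    using that T by auto
  have "range T \<approx> Pow (UNIV :: real set)"
    using inj_on_image_eqpoll_self[OF \<open>inj T\<close>] by simp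
  moreover have "order_dense A" if "A \<in> range T" for A
    using T_range[OF that] order_dense_if_c_dense by blast
  ultimately have "\<exists>F\<subseteq>range T. F \<approx> Pow (UNIV :: real set)
      \<and> (\<forall>A\<in>F. \<forall>B\<in>F. A \<noteq> B \<longrightarrow> \<not> order_iso_sets A B)"
    by (rule exists_pairwise_non_iso_subfamily)
  then obtain F where F: "F \<subseteq> range T" "F \<approx> Pow (UNIV :: real set)"
    "\<forall>A\<in>F. \<forall>B\<in>F. A \<noteq> B \<longrightarrow> \<not> order_iso_sets A B"
    by blast
  show ?thesis
  proof (intro exI[of _ F] conjI)
    show "\<forall>A\<in>F. c_dense A \<and> turing_closed A"
      using F(1) T_range by auto
  qed (fact F(2), fact F(3))
qed

end
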